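(* Let $\mathfrak M\models S_{\overline\alpha}$. Assume that $d_{\mathfrak M}(\mathfrak A)=0$ for every finite $\mathfrak A\subseteq\mathfrak M$ and that $\mathfrak M$ has finite closures. Then $\mathfrak M$ is atomic.
   Context: Fix a finite relational language $L$ in which every relation symbol has arity at least $2$. $K_L$ is the class of all finite $L$-structures (including the empty one) in which every relation symbol is interpreted symmetrically and irreflexively. Fix $\overline\alpha:L\to(0,1]$, writing $\overline\alpha_E=\overline\alpha(E)$, such that it is not the case that all symbols of $L$ are binary and $\overline\alpha_E=1$ for all $E$. For $\mathfrak A\in K_L$ let $N_E(\mathfrak A)$ be the number of subsets of $A$ on which $E$ holds and $\delta(\mathfrak A)=|A|-\sum_{E}\overline\alpha_E N_E(\mathfrak A)$; subsets of a structure are identified with induced substructures. $K_{\overline\alpha}=\{\mathfrak A\in K_L:\delta(\mathfrak A')\ge0\text{ for all substructures }\mathfrak A'\subseteq\mathfrak A\}$. For $\mathfrak A\subseteq\mathfrak B$ in $K_L$, $\mathfrak A\le\mathfrak B$ means $\delta(\mathfrak A)\le\delta(\mathfrak A')$ for all $\mathfrak A\subseteq\mathfrak A'\subseteq\mathfrak B$; for finite $\mathfrak A\subseteq\mathfrak M$, $\mathfrak A\le\mathfrak M$ means $\mathfrak A\le\mathfrak B$ for every finite $\mathfrak A\subseteq\mathfrak B\subseteq\mathfrak M$. $S_{\overline\alpha}$ is the theory whose models $\mathfrak M$ are those in which every finite substructure lies in $K_{\overline\alpha}$ and, for all $\mathfrak A\le\mathfrak B$ in $K_{\overline\alpha}$,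 every embedding $\mathfrak A\to\mathfrak M$ extends to an embedding $\mathfrak B\to\mathfrak M$. $\mathfrak M$ has finite closures if every finite $\mathfrak A\subseteq\mathfrak M$ is contained in a finite $\mathfrak B\subseteq\mathfrak M$ with $\mathfrak B\le\mathfrak M$. $d_{\mathfrak M}(\mathfrak A)=\inf\{\delta(\mathfrak B):\mathfrak A\subseteq\mathfrak B,\ \mathfrak B\text{ finite},\ \mathfrak B\le\mathfrak M\}$. *)

theory Defs
  imports Complex_Main
begin

text \<open>
The finite relational language L is the (finite) type 'r; each symbol E
has arity ar E.  A symmetric irreflexive interpretation of E on a carrier A is
represented by the set I E of those subsets of A (of size ar E) on which E holds:
E(a1,...,ak) holds iff the ai are pairwise distinct and {a1,...,ak} is in I E.
Induced substructures of (A, I) on A' \<subseteq> A use the same I restricted to subsets of A'.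
\<close>

definition wf_struct :: "('r \<Rightarrow> nat) \<Rightarrow> 'a set \<Rightarrow> ('r \<Rightarrow> 'a set set) \<Rightarrow> bool" where
  "wf_struct ar A I \<longleftrightarrow> (\<forall>E. \<forall>s\<in>I E. s \<subseteq> A \<and> finite s \<and> card s = ar E)"

definition NE :: "('r \<Rightarrow> 'a set set) \<Rightarrow> 'r \<Rightarrow> 'a set \<Rightarrow> nat" where
  "NE I E A = card {s \<in> I E. s \<subseteq> A}"

definition delta :: "('r::finite \<Rightarrow> real) \<Rightarrow> ('r \<Rightarrow> 'a set set) \<Rightarrow> 'a set \<Rightarrow> real" where
  "delta \<alpha> I A = real (card A) - (\<Sum>E\<in>UNIV. \<alpha> E * real (NE I E A))"

definition in_K_alpha :: "('r::finite \<Rightarrow> real) \<Rightarrow> ('r \<Rightarrow> 'a set set) \<Rightarrow> 'a set \<Rightarrow> bool" where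
  "in_K_alpha \<alpha> I B \<longleftrightarrow> (\<forall>A'. A' \<subseteq> B \<longrightarrow> 0 \<le> delta \<alpha> I A')"

definition strong :: "('r::finite \<Rightarrow> real) \<Rightarrow> ('r \<Rightarrow> 'a set set) \<Rightarrow> 'a set \<Rightarrow> 'a set \<Rightarrow> bool" where
  "strong \<alpha> I A B \<longleftrightarrow> A \<subseteq> B \<and> (\<forall>A'. A \<subseteq> A' \<and> A' \<subseteq> B \<longrightarrow> delta \<alpha> I A \<le> delta \<alpha> I A')"

definition strongM :: "('r::finite \<Rightarrow> real) \<Rightarrow> 'a set \<Rightarrow> ('r \<Rightarrow> 'a set set) \<Rightarrow> 'a set \<Rightarrow> bool" where
  "strongM \<alpha> M I A \<longleftrightarrow> finite A \<and> A \<subseteq> M \<and>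
     (\<forall>B. finite B \<and> A \<subseteq> B \<and> B \<subseteq> M \<longrightarrow> strong \<alpha> I A B)"

definition embedding :: "('b \<Rightarrow> 'a) \<Rightarrow> 'b set \<Rightarrow> ('r \<Rightarrow> 'b set set) \<Rightarrow> 'a set \<Rightarrow> ('r \<Rightarrow> 'a set set) \<Rightarrow> bool" where
  "embedding f A J M I \<longleftrightarrow> inj_on f A \<and> f ` A \<subseteq> M \<and>
     (\<forall>E. \<forall>s. s \<subseteq> A \<longrightarrow> (s \<in> J E \<longleftrightarrow> f ` s \<in> I E))"

text \<open>M is a model of S_alpha.  Finite structures A \<le> B in K_alpha are taken, up to
isomorphism, with carriers finite subsets of nat.\<close>
definition models_S :: "('r::finite \<Rightarrow> nat) \<Rightarrow> ('r \<Rightarrow> real) \<Rightarrow> 'a set \<Rightarrow> ('r \<Rightarrow> 'a set set) \<Rightarrow> bool" where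
  "models_S ar \<alpha> M I \<longleftrightarrow> wf_struct ar M I \<and>
     (\<forall>A. finite A \<and> A \<subseteq> M \<longrightarrow> in_K_alpha \<alpha> I A) \<and>
     (\<forall>(A::nat set) B J f. finite B \<and> wf_struct ar B J \<and> in_K_alpha \<alpha> J B \<and> strong \<alpha> J A B
        \<and> embedding f A J M I \<longrightarrow> (\<exists>g. embedding g B J M I \<and> (\<forall>x\<in>A. g x = f x)))"

definition finite_closures :: "('r::finite \<Rightarrow> real) \<Rightarrow> 'a set \<Rightarrow> ('r \<Rightarrow> 'a set set) \<Rightarrow> bool" where
  "finite_closures \<alpha> M I \<longleftrightarrow>
     (\<forall>A. finite A \<and> A \<subseteq> M \<longrightarrow> (\<exists>B. A \<subseteq> B \<and> strongM \<alpha> M I B))"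

definition dM :: "('r::finite \<Rightarrow> real) \<Rightarrow> 'a set \<Rightarrow> ('r \<Rightarrow> 'a set set) \<Rightarrow> 'a set \<Rightarrow> real" where
  "dM \<alpha> M I A = Inf {delta \<alpha> I B | B. A \<subseteq> B \<and> strongM \<alpha> M I B}"

datatype 'r fm = Rel 'r "nat list" | Eq nat nat | Neg "'r fm" | Conj "'r fm" "'r fm" | Ex nat "'r fm"

fun fv :: "'r fm \<Rightarrow> nat set" where
  "fv (Rel E xs) = set xs"
| "fv (Eq x y) = {x, y}"
| "fv (Neg \<phi>) = fv \<phi>"
| "fv (Conj \<phi> \<psi>) = fv \<phi> \<union> fv \<psi>"
| "fv (Ex x \<phi>) = fv \<phi> - {x}"

fun sat :: "'a set \<Rightarrow> ('r \<Rightarrow> 'a set set) \<Rightarrow> (nat \<Rightarrow> 'a) \<Rightarrow> 'r fm \<Rightarrow> bool" where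
  "sat M I v (Rel E xs) \<longleftrightarrow> distinct (map v xs) \<and> set (map v xs) \<in> I E"
| "sat M I v (Eq x y) \<longleftrightarrow> v x = v y"
| "sat M I v (Neg \<phi>) \<longleftrightarrow> \<not> sat M I v \<phi>"
| "sat M I v (Conj \<phi> \<psi>) \<longleftrightarrow> sat M I v \<phi> \<and> sat M I v \<psi>"
| "sat M I v (Ex x \<phi>) \<longleftrightarrow> (\<exists>a\<in>M. sat M I (v(x := a)) \<phi>)"

text \<open>M is atomic: every finite tuple (a_0,...,a_{n-1}), given as the values of an
assignment on variables 0..n-1, realizes a type isolated (in Th(M)) by a formula phi.\<close>
definition atomic_model :: "'a set \<Rightarrow> ('r \<Rightarrow> 'a set set) \<Rightarrow> bool" where
  "atomic_model M I \<longleftrightarrow> (\<forall>n v. (\<forall>i<n. v i \<in> M) \<longrightarrow>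
     (\<exists>\<phi>. fv \<phi> \<subseteq> {..<n} \<and> sat M I v \<phi> \<and>
        (\<forall>\<psi>. fv \<psi> \<subseteq> {..<n} \<and> sat M I v \<psi> \<longrightarrow>
           (\<forall>w. (\<forall>i<n. w i \<in> M) \<and> sat M I w \<phi> \<longrightarrow> sat M I w \<psi>))))"

end

theory Submission
  imports Defs
begin

text \<open>
Call a finite \<open>B \<subseteq> M\<close> null if \<open>\<delta>(B) = 0\<close>.  Because \<open>\<delta>\<close> is submodular, the strong
finite subsets of \<open>M\<close> are closed under intersection, so every finite \<open>A\<close> has a least strong
superset, whose \<open>\<delta>\<close> is \<open>d\<^sub>M(A) = 0\<close>: every finite set lies in a null set.  A null set is
strong in every finite superset, as \<open>\<delta> \<ge> 0\<close> on \<open>M\<close>; hence, by the extension property of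
\<open>M\<close>, partial isomorphisms of \<open>M\<close> with null domain form a back-and-forth system and preserve
all formulas.  The type of a tuple \<open>a\<close> is therefore isolated by the formula saying that \<open>a\<close>
extends to a tuple with the quantifier-free diagram of a null set containing \<open>a\<close>: any
realisation yields such a partial isomorphism.
\<close>

subsection \<open>Submodularity of \<open>\<delta>\<close> and null sets\<close>

lemma NE_Un_Int_le:
  assumes "finite X" "finite Y"
  shows "NE I E X + NE I E Y \<le> NE I E (X \<union> Y) + NE I E (X \<inter> Y)"
proof -
  let ?P = "{s \<in> I E. s \<subseteq> X}" and ?Q = "{s \<in> I E. s \<subseteq> Y}"
  have fin: "finite {s \<in> I E. s \<subseteq> Z}" if "finite Z" for Z
    by (rule finite_subset[of _ "Pow Z"]) (use that in auto)
  have "card ?P + card ?Q = card (?P \<union> ?Q) + card (?P \<inter> ?Q)"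
    using card_Un_Int[OF fin fin] assms .
  moreover have "card (?P \<union> ?Q) \<le> card {s \<in> I E. s \<subseteq> X \<union> Y}"
    by (rule card_mono[OF fin]) (use assms in auto)
  moreover have "?P \<inter> ?Q = {s \<in> I E. s \<subseteq> X \<inter> Y}" by auto
  ultimately show ?thesis unfolding NE_def by simp
qed

lemma delta_Un_Int_le:
  assumes "finite X" "finite Y" "\<And>E. 0 \<le> \<alpha> E"
  shows "delta \<alpha> I (X \<union> Y) + delta \<alpha> I (X \<inter> Y) \<le> delta \<alpha> I X + delta \<alpha> I Y"
proof -
  have card: "real (card X) + real (card Y) = real (card (X \<union> Y)) + real (card (X \<inter> Y))"
    using card_Un_Int[OF assms(1,2)] by linarith
  have "\<alpha> E * real (NE I E X) + \<alpha> E * real (NE I E Y)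
      \<le> \<alpha> E * real (NE I E (X \<union> Y)) + \<alpha> E * real (NE I E (X \<inter> Y))" for E
  proof -
    have "real (NE I E X + NE I E Y) \<le> real (NE I E (X \<union> Y) + NE I E (X \<inter> Y))"
      using NE_Un_Int_le[OF assms(1,2)] by (rule of_nat_mono)
    from mult_left_mono[OF this assms(3)] show ?thesis by (simp add: distrib_left)
  qed
  then have "(\<Sum>E\<in>UNIV. \<alpha> E * real (NE I E X) + \<alpha> E * real (NE I E Y))
      \<le> (\<Sum>E\<in>UNIV. \<alpha> E * real (NE I E (X \<union> Y)) + \<alpha> E * real (NE I E (X \<inter> Y)))"
    by (rule sum_mono)
  then show ?thesis unfolding delta_def sum.distrib using card by linarith
qed

lemma strongM_iff_delta_le:
  "strongM \<alpha> M I Z \<longleftrightarrow> finite Z \<and> Z \<subseteq> M \<and>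
     (\<forall>D. finite D \<and> Z \<subseteq> D \<and> D \<subseteq> M \<longrightarrow> delta \<alpha> I Z \<le> delta \<alpha> I D)"
proof
  assume "strongM \<alpha> M I Z"
  then show "finite Z \<and> Z \<subseteq> M \<and>
      (\<forall>D. finite D \<and> Z \<subseteq> D \<and> D \<subseteq> M \<longrightarrow> delta \<alpha> I Z \<le> delta \<alpha> I D)"
    unfolding strongM_def strong_def by (meson order_refl)
next
  assume Z: "finite Z \<and> Z \<subseteq> M \<and>
      (\<forall>D. finite D \<and> Z \<subseteq> D \<and> D \<subseteq> M \<longrightarrow> delta \<alpha> I Z \<le> delta \<alpha> I D)"
  have "strong \<alpha> I Z B" if B: "finite B" "Z \<subseteq> B" "B \<subseteq> M" for B
    unfolding strong_def
  proof (intro conjI allI impI)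
    fix D assume D: "Z \<subseteq> D \<and> D \<subseteq> B"
    then have "finite D" using B(1) finite_subset by blast
    then show "delta \<alpha> I Z \<le> delta \<alpha> I D" using Z B D by blast
  qed (fact B(2))
  then show "strongM \<alpha> M I Z" unfolding strongM_def using Z by blast
qed

lemma strongM_delta_le:
  "strongM \<alpha> M I Z \<Longrightarrow> finite D \<Longrightarrow> Z \<subseteq> D \<Longrightarrow> D \<subseteq> M \<Longrightarrow> delta \<alpha> I Z \<le> delta \<alpha> I D"
  unfolding strongM_iff_delta_le by blast

lemma strongM_Int:
  assumes X: "strongM \<alpha> M I X" and Y: "strongM \<alpha> M I Y" and alpha: "\<And>E. 0 \<le> \<alpha> E"
  shows "strongM \<alpha> M I (X \<inter> Y)"
proof -
  have fin: "finite X" "finite Y" and sub: "X \<subseteq> M" "Y \<subseteq> M"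
    using X Y unfolding strongM_iff_delta_le by auto
  have "delta \<alpha> I (X \<inter> Y) \<le> delta \<alpha> I D" if D: "finite D" "X \<inter> Y \<subseteq> D" "D \<subseteq> M" for D
  proof -
    have "delta \<alpha> I (D \<union> Y) + delta \<alpha> I (D \<inter> Y) \<le> delta \<alpha> I D + delta \<alpha> I Y"
      using delta_Un_Int_le[OF D(1) fin(2) alpha] .
    moreover have "delta \<alpha> I Y \<le> delta \<alpha> I (D \<union> Y)"
      using D fin sub by (intro strongM_delta_le[OF Y]) auto
    moreover have "delta \<alpha> I ((D \<inter> Y) \<union> X) + delta \<alpha> I (X \<inter> Y)
        \<le> delta \<alpha> I (D \<inter> Y) + delta \<alpha> I X"
    proof -
      have "(D \<inter> Y) \<inter> X = X \<inter> Y" using D by auto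
      then show ?thesis using delta_Un_Int_le[of "D \<inter> Y" X \<alpha> I] D(1) fin(1) alpha by simp
    qed
    moreover have "delta \<alpha> I X \<le> delta \<alpha> I ((D \<inter> Y) \<union> X)"
      using D fin sub by (intro strongM_delta_le[OF X]) auto
    ultimately show ?thesis by linarith
  qed
  then show ?thesis unfolding strongM_iff_delta_le using fin sub by auto
qed

definition null_set :: "('r::finite \<Rightarrow> real) \<Rightarrow> ('r \<Rightarrow> 'a set set) \<Rightarrow> 'a set \<Rightarrow> 'a set \<Rightarrow> bool" where
  "null_set \<alpha> I M X \<longleftrightarrow> finite X \<and> X \<subseteq> M \<and> delta \<alpha> I X = 0"

lemma exists_null_superset:
  assumes alpha: "\<And>E. 0 \<le> \<alpha> E"
    and d0: "\<And>A. finite A \<Longrightarrow> A \<subseteq> M \<Longrightarrow> dM \<alpha> M I A = 0"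
    and closures: "finite_closures \<alpha> M I"
    and A: "finite A" "A \<subseteq> M"
  shows "\<exists>B. A \<subseteq> B \<and> null_set \<alpha> I M B"
proof -
  let ?S = "{B. A \<subseteq> B \<and> strongM \<alpha> M I B}"
  obtain B1 where "B1 \<in> ?S" using closures A unfolding finite_closures_def by auto
  then obtain B0 where B0: "B0 \<in> ?S" and least: "\<And>B. B \<in> ?S \<Longrightarrow> card B0 \<le> card B"
    using ex_has_least_nat[of "\<lambda>B. B \<in> ?S" B1 card] by blast
  have fin: "finite B0" using B0 unfolding strongM_iff_delta_le by auto
  have "delta \<alpha> I B0 \<le> delta \<alpha> I B" if B: "B \<in> ?S" for B
  proof -
    have "B0 \<inter> B \<in> ?S" using B B0 strongM_Int[of \<alpha> M I B0 B] alpha by auto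
    then have "card B0 \<le> card (B0 \<inter> B)" by (rule least)
    then have "B0 \<inter> B = B0" using fin by (intro card_seteq) auto
    then have "B0 \<subseteq> B" by blast
    moreover have "finite B" "B \<subseteq> M" using B unfolding strongM_def by auto
    ultimately show ?thesis using B0 by (intro strongM_delta_le) auto
  qed
  then have "Inf {delta \<alpha> I B | B. A \<subseteq> B \<and> strongM \<alpha> M I B} = delta \<alpha> I B0"
    using B0 by (intro cInf_eq_minimum) auto
  then have "delta \<alpha> I B0 = 0" using d0[OF A] unfolding dM_def by simp
  then show ?thesis using B0 unfolding null_set_def strongM_def by auto
qed

lemma embedding_subset: "embedding f A J M I \<Longrightarrow> B \<subseteq> A \<Longrightarrow> embedding f B J M I"
  unfolding embedding_def by (auto intro: inj_on_subset)

lemma embedding_into_superset: "embedding f A J M I \<Longrightarrow> f ` A \<subseteq> M' \<Longrightarrow> embedding f A J M' I"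
  unfolding embedding_def by blast

lemma embedding_comp:
  assumes e: "embedding e C K B J" and g: "embedding g B J M I"
  shows "embedding (g \<circ> e) C K M I"
proof -
  have e_inj: "inj_on e C" and eC: "e ` C \<subseteq> B" and e_rel: "\<And>E s. s \<subseteq> C \<Longrightarrow> s \<in> K E \<longleftrightarrow> e ` s \<in> J E"
    using e unfolding embedding_def by auto
  have g_inj: "inj_on g B" and gB: "g ` B \<subseteq> M" and g_rel: "\<And>E s. s \<subseteq> B \<Longrightarrow> s \<in> J E \<longleftrightarrow> g ` s \<in> I E"
    using g unfolding embedding_def by auto
  have "inj_on (g \<circ> e) C" using e_inj g_inj eC by (rule comp_inj_on[OF _ inj_on_subset])
  moreover have "(g \<circ> e) ` C \<subseteq> M" using eC gB by (auto simp: image_comp[symmetric])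
  moreover have "s \<in> K E \<longleftrightarrow> (g \<circ> e) ` s \<in> I E" if s: "s \<subseteq> C" for E s
  proof -
    have "e ` s \<subseteq> B" using s eC by blast
    then show ?thesis using e_rel[OF s] g_rel by (simp add: image_comp)
  qed
  ultimately show ?thesis unfolding embedding_def by blast
qed

lemma embedding_inv_into:
  assumes f: "embedding f A J M I"
  shows "embedding (inv_into A f) (f ` A) I A J"
proof -
  have rel: "\<And>E t. t \<subseteq> A \<Longrightarrow> t \<in> J E \<longleftrightarrow> f ` t \<in> I E"
    using f unfolding embedding_def by auto
  have "inj_on (inv_into A f) (f ` A)" by (rule inj_on_inv_into) simp
  moreover have "inv_into A f ` f ` A \<subseteq> A" by (auto intro: inv_into_into)
  moreover have "s \<in> I E \<longleftrightarrow> inv_into A f ` s \<in> J E" if s: "s \<subseteq> f ` A" for E s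
  proof -
    have "inv_into A f ` s \<subseteq> A" using s by (auto intro: inv_into_into)
    moreover have "f ` inv_into A f ` s = s" by (rule image_inv_into_cancel[OF refl s])
    ultimately show ?thesis using rel by metis
  qed
  ultimately show ?thesis unfolding embedding_def by blast
qed

lemma delta_image_embedding:
  assumes f: "embedding f A J M I"
  shows "delta \<alpha> I (f ` A) = delta \<alpha> J A"
proof -
  have inj: "inj_on f A" and rel: "\<And>E s. s \<subseteq> A \<Longrightarrow> s \<in> J E \<longleftrightarrow> f ` s \<in> I E"
    using f unfolding embedding_def by auto
  have "NE I E (f ` A) = NE J E A" for E
  proof -
    have "{s \<in> I E. s \<subseteq> f ` A} \<subseteq> image f ` {s \<in> J E. s \<subseteq> A}"
    proof
      fix s assume s: "s \<in> {s \<in> I E. s \<subseteq> f ` A}"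
      let ?t = "{x \<in> A. f x \<in> s}"
      have "f ` ?t = s" using s by auto
      moreover have "?t \<in> J E" using rel[of ?t E] s calculation by simp
      ultimately show "s \<in> image f ` {s \<in> J E. s \<subseteq> A}" by blast
    qed
    moreover have "image f ` {s \<in> J E. s \<subseteq> A} \<subseteq> {s \<in> I E. s \<subseteq> f ` A}"
      using rel by blast
    moreover have "inj_on (image f) {s \<in> J E. s \<subseteq> A}"
      by (rule inj_on_subset[OF inj_on_image_Pow[OF inj]]) auto
    ultimately have "{s \<in> I E. s \<subseteq> f ` A} = image f ` {s \<in> J E. s \<subseteq> A}"
      and "inj_on (image f) {s \<in> J E. s \<subseteq> A}" by auto
    then show ?thesis unfolding NE_def by (simp add: card_image)
  qed
  then show ?thesis unfolding delta_def card_image[OF inj] by simp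
qed

lemma delta_image_embedding_subset:
  "embedding f B J M I \<Longrightarrow> A \<subseteq> B \<Longrightarrow> delta \<alpha> I (f ` A) = delta \<alpha> J A"
  by (rule delta_image_embedding[OF embedding_subset])

lemma in_K_alpha_embedding:
  assumes f: "embedding f B J M I" and K: "in_K_alpha \<alpha> I (f ` B)"
  shows "in_K_alpha \<alpha> J B"
  unfolding in_K_alpha_def
proof (intro allI impI)
  fix A assume "A \<subseteq> B"
  moreover from this have "0 \<le> delta \<alpha> I (f ` A)"
    using K unfolding in_K_alpha_def by (simp add: image_mono)
  ultimately show "0 \<le> delta \<alpha> J A" using delta_image_embedding_subset[OF f] by simp
qed

lemma strong_embedding:
  assumes f: "embedding f B J M I" and AB: "A \<subseteq> B" and strong: "strong \<alpha> I (f ` A) (f ` B)"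
  shows "strong \<alpha> J A B"
  unfolding strong_def
proof (intro conjI allI impI)
  show "A \<subseteq> B" by fact
  fix D assume D: "A \<subseteq> D \<and> D \<subseteq> B"
  then have "delta \<alpha> I (f ` A) \<le> delta \<alpha> I (f ` D)"
    using strong unfolding strong_def by (simp add: image_mono)
  then show "delta \<alpha> J A \<le> delta \<alpha> J D"
    using D AB delta_image_embedding_subset[OF f] by simp
qed

lemma wf_struct_embedding:
  assumes wf: "wf_struct ar M I" and f: "embedding f B J M I"
    and J: "\<And>E. \<forall>s\<in>J E. s \<subseteq> B" and B: "finite B"
  shows "wf_struct ar B J"
  unfolding wf_struct_def
proof (intro allI ballI conjI)
  fix E s assume s: "s \<in> J E"
  then show sB: "s \<subseteq> B" using J by blast
  then show "finite s" using B finite_subset by blast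
  have "f ` s \<in> I E" using f s sB unfolding embedding_def by blast
  then have "card (f ` s) = ar E" using wf unfolding wf_struct_def by blast
  moreover have "inj_on f s" using f sB unfolding embedding_def by (blast intro: inj_on_subset)
  ultimately show "card s = ar E" by (simp add: card_image)
qed

text \<open>The extension property of \<open>M\<close> is stated for structures on finite sets of naturals;
copying a finite \<open>C \<subseteq> M\<close> onto \<open>{0..<card C}\<close> makes it available for \<open>C\<close> itself.\<close>

lemma models_S_extend_embedding:
  assumes model: "models_S ar \<alpha> M I"
    and C: "finite C" "C \<subseteq> M" and XC: "strong \<alpha> I X C"
    and h: "embedding h X I M I"
  shows "\<exists>g. embedding g C I M I \<and> (\<forall>x\<in>X. g x = h x)"
proof -
  have wfM: "wf_struct ar M I" and K: "in_K_alpha \<alpha> I C"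
    and rich: "\<And>(A::nat set) B J f. finite B \<Longrightarrow> wf_struct ar B J \<Longrightarrow> in_K_alpha \<alpha> J B
      \<Longrightarrow> strong \<alpha> J A B \<Longrightarrow> embedding f A J M I \<Longrightarrow> \<exists>g. embedding g B J M I \<and> (\<forall>x\<in>A. g x = f x)"
    using model C unfolding models_S_def by auto
  define Bn where "Bn = {0..<card C}"
  obtain d where d: "bij_betw d Bn C" unfolding Bn_def using ex_bij_betw_nat_finite[OF C(1)] by blast
  define J where "J E = {s. s \<subseteq> Bn \<and> d ` s \<in> I E}" for E
  define e where "e = inv_into Bn d"
  have dC: "d ` Bn = C" and d_inj: "inj_on d Bn" using d by (auto simp: bij_betw_def)
  have d_emb: "embedding d Bn J M I" unfolding embedding_def J_def using d_inj dC C(2) by auto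
  have e_emb: "embedding e C I Bn J" using embedding_inv_into[OF d_emb] unfolding e_def dC .
  have XC': "X \<subseteq> C" using XC unfolding strong_def by blast
  have eX: "e ` X \<subseteq> Bn" unfolding e_def using XC' dC by (auto intro: inv_into_into)
  have dX: "d ` e ` X = X" unfolding e_def by (rule image_inv_into_cancel[OF dC XC'])
  have "wf_struct ar Bn J"
    by (rule wf_struct_embedding[OF wfM d_emb]) (auto simp: J_def Bn_def)
  moreover have "in_K_alpha \<alpha> J Bn" using in_K_alpha_embedding[OF d_emb] K dC by simp
  moreover have "strong \<alpha> J (e ` X) Bn" using strong_embedding[OF d_emb eX] XC dX dC by simp
  moreover have "embedding (h \<circ> d) (e ` X) J M I"
    using embedding_into_superset[OF embedding_subset[OF d_emb eX]] dX h
    by (intro embedding_comp) auto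
  ultimately obtain g where g: "embedding g Bn J M I" "\<forall>x\<in>e ` X. g x = (h \<circ> d) x"
    using rich[of Bn J "e ` X" "h \<circ> d"] unfolding Bn_def by blast
  have "(g \<circ> e) x = h x" if "x \<in> X" for x
  proof -
    have "g (e x) = h (d (e x))" using g(2) that by simp
    also have "d (e x) = x" unfolding e_def using that XC' dC by (auto intro: f_inv_into_f)
    finally show ?thesis by simp
  qed
  then show ?thesis using embedding_comp[OF e_emb g(1)] by blast
qed

subsection \<open>Partial isomorphisms between null sets\<close>

definition null_iso :: "('r::finite \<Rightarrow> real) \<Rightarrow> ('r \<Rightarrow> 'a set set) \<Rightarrow> 'a set \<Rightarrow> ('a \<Rightarrow> 'a) \<Rightarrow> 'a set \<Rightarrow> bool" where
  "null_iso \<alpha> I M h X \<longleftrightarrow> null_set \<alpha> I M X \<and> embedding h X I M I"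

lemma null_iso_inv_into:
  assumes "null_iso \<alpha> I M h X"
  shows "null_iso \<alpha> I M (inv_into X h) (h ` X)"
proof -
  have X: "finite X" "X \<subseteq> M" "delta \<alpha> I X = 0" and h: "embedding h X I M I"
    using assms unfolding null_iso_def null_set_def by auto
  have "null_set \<alpha> I M (h ` X)"
    using X h delta_image_embedding[OF h, of \<alpha>] unfolding null_set_def embedding_def by auto
  moreover have "embedding (inv_into X h) (h ` X) I M I"
  proof (rule embedding_into_superset[OF embedding_inv_into[OF h]])
    show "inv_into X h ` h ` X \<subseteq> M"
      using h X(2) unfolding embedding_def by simp
  qed
  ultimately show ?thesis unfolding null_iso_def by blast
qed

lemma null_iso_extend:
  assumes model: "models_S ar \<alpha> M I"
    and null_superset: "\<And>A. finite A \<Longrightarrow> A \<subseteq> M \<Longrightarrow> \<exists>B. A \<subseteq> B \<and> null_set \<alpha> I M B"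
    and h: "null_iso \<alpha> I M h X" and c: "c \<in> M"
  shows "\<exists>h' X'. null_iso \<alpha> I M h' X' \<and> X \<subseteq> X' \<and> c \<in> X' \<and> (\<forall>x\<in>X. h' x = h x)"
proof -
  have X: "finite X" "X \<subseteq> M" "delta \<alpha> I X = 0" and h_emb: "embedding h X I M I"
    using h unfolding null_iso_def null_set_def by auto
  obtain C where XC: "insert c X \<subseteq> C" and C: "null_set \<alpha> I M C"
    using null_superset[of "insert c X"] X c by auto
  have fin: "finite C" and CM: "C \<subseteq> M" using C unfolding null_set_def by auto
  have "0 \<le> delta \<alpha> I D" if "D \<subseteq> C" for D
    using model fin CM that unfolding models_S_def in_K_alpha_def by blast
  then have "strong \<alpha> I X C" using XC X(3) unfolding strong_def by auto
  then obtain g where "embedding g C I M I" "\<forall>x\<in>X. g x = h x"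
    using models_S_extend_embedding[OF model fin CM _ h_emb] by blast
  then show ?thesis using C XC unfolding null_iso_def by blast
qed

subsection \<open>Formulas and diagrams\<close>

lemma sat_fv_cong: "(\<forall>i\<in>fv \<psi>. v i = w i) \<Longrightarrow> sat M I v \<psi> = sat M I w \<psi>"
proof (induction \<psi> arbitrary: v w)
  case (Rel E xs)
  then have "map v xs = map w xs" by auto
  then show ?case by (simp only: sat.simps)
next
  case (Ex x \<phi>)
  then have "\<And>a. sat M I (v(x := a)) \<phi> = sat M I (w(x := a)) \<phi>" by auto
  then show ?case by simp
next
  case (Conj \<phi>\<^sub>1 \<phi>\<^sub>2)
  have "sat M I v \<phi>\<^sub>1 = sat M I w \<phi>\<^sub>1" "sat M I v \<phi>\<^sub>2 = sat M I w \<phi>\<^sub>2"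
    using Conj.prems by (auto intro!: Conj.IH)
  then show ?case by simp
qed auto

lemma back_and_forth_sat:
  assumes ext: "\<And>h X c. P h X \<Longrightarrow> c \<in> M \<Longrightarrow> \<exists>h' X'. P h' X' \<and> X \<subseteq> X' \<and> c \<in> X' \<and> (\<forall>x\<in>X. h' x = h x)"
    and inv: "\<And>h X. P h X \<Longrightarrow> P (inv_into X h) (h ` X)"
    and emb: "\<And>h X. P h X \<Longrightarrow> embedding h X I M I"
  shows "P h X \<Longrightarrow> (\<forall>i\<in>fv \<psi>. v i \<in> X) \<Longrightarrow> sat M I v \<psi> = sat M I (h \<circ> v) \<psi>"
proof (induction \<psi> arbitrary: h X v)
  case (Rel E xs)
  have hinj: "inj_on h X" and hpr: "\<And>E s. s \<subseteq> X \<Longrightarrow> s \<in> I E \<longleftrightarrow> h ` s \<in> I E"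
    using emb[OF Rel.prems(1)] unfolding embedding_def by auto
  have sub: "set (map v xs) \<subseteq> X" using Rel.prems(2) by auto
  have "distinct (map (h \<circ> v) xs) = distinct (map v xs)"
    using distinct_map inj_on_subset[OF hinj sub] by (metis map_map)
  moreover have "set (map (h \<circ> v) xs) = h ` set (map v xs)" by auto
  ultimately show ?case using hpr[OF sub] by (simp only: sat.simps)
next
  case (Eq x y)
  have hinj: "inj_on h X" using emb[OF Eq.prems(1)] unfolding embedding_def by auto
  then show ?case using Eq.prems(2) by (auto dest: inj_onD)
next
  case (Neg \<phi>) then show ?case by simp
next
  case (Conj \<phi>1 \<phi>2) then show ?case by simp
next
  case (Ex x \<phi>)
  show ?case
  proof
    assume "sat M I v (fm.Ex x \<phi>)"
    then obtain a where a: "a \<in> M" "sat M I (v(x := a)) \<phi>" by auto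
    obtain h' X' where h': "P h' X'" "X \<subseteq> X'" "a \<in> X'" "\<forall>y\<in>X. h' y = h y"
      using ext[OF Ex.prems(1) a(1)] by blast
    have "\<forall>i\<in>fv \<phi>. (v(x := a)) i \<in> X'" using Ex.prems(2) h' by auto
    then have "sat M I (h' \<circ> v(x := a)) \<phi>" using Ex.IH[OF h'(1)] a(2) by blast
    moreover have "\<forall>i\<in>fv \<phi>. (h' \<circ> v(x := a)) i = ((h \<circ> v)(x := h' a)) i"
      using Ex.prems(2) h' by auto
    ultimately have "sat M I ((h \<circ> v)(x := h' a)) \<phi>" using sat_fv_cong by blast
    moreover have "h' a \<in> M" using emb[OF h'(1)] h'(3) unfolding embedding_def by auto
    ultimately show "sat M I (h \<circ> v) (fm.Ex x \<phi>)" by auto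
  next
    assume "sat M I (h \<circ> v) (fm.Ex x \<phi>)"
    then obtain b where b: "b \<in> M" "sat M I ((h \<circ> v)(x := b)) \<phi>" by auto
    have hinj: "inj_on h X" using emb[OF Ex.prems(1)] unfolding embedding_def by auto
    obtain k Y where k: "P k Y" "h ` X \<subseteq> Y" "b \<in> Y" "\<forall>y\<in>h ` X. k y = inv_into X h y"
      using ext[OF inv[OF Ex.prems(1)] b(1)] by blast
    have "\<forall>i\<in>fv \<phi>. ((h \<circ> v)(x := b)) i \<in> Y" using Ex.prems(2) k by auto
    then have "sat M I (k \<circ> (h \<circ> v)(x := b)) \<phi>" using Ex.IH[OF k(1)] b(2) by blast
    moreover have "\<forall>i\<in>fv \<phi>. (k \<circ> (h \<circ> v)(x := b)) i = (v(x := k b)) i"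
      using Ex.prems(2) k hinj by auto
    ultimately have "sat M I (v(x := k b)) \<phi>" using sat_fv_cong by blast
    moreover have "k b \<in> M" using emb[OF k(1)] k(3) unfolding embedding_def by auto
    ultimately show "sat M I v (fm.Ex x \<phi>)" by auto
  qed
qed

lemma null_iso_sat:
  assumes model: "models_S ar \<alpha> M I"
    and null_superset: "\<And>A. finite A \<Longrightarrow> A \<subseteq> M \<Longrightarrow> \<exists>B. A \<subseteq> B \<and> null_set \<alpha> I M B"
    and h: "null_iso \<alpha> I M h X" and v: "\<forall>i\<in>fv \<psi>. v i \<in> X"
  shows "sat M I v \<psi> = sat M I (h \<circ> v) \<psi>"
proof (rule back_and_forth_sat[where P = "null_iso \<alpha> I M", OF _ _ _ h v])
  fix g Y c assume "null_iso \<alpha> I M g Y" "c \<in> M"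
  then show "\<exists>g' Y'. null_iso \<alpha> I M g' Y' \<and> Y \<subseteq> Y' \<and> c \<in> Y' \<and> (\<forall>x\<in>Y. g' x = g x)"
    using null_iso_extend[OF model null_superset] by blast
next
  show "\<And>g Y. null_iso \<alpha> I M g Y \<Longrightarrow> null_iso \<alpha> I M (inv_into Y g) (g ` Y)"
    by (rule null_iso_inv_into)
  show "\<And>g Y. null_iso \<alpha> I M g Y \<Longrightarrow> embedding g Y I M I"
    unfolding null_iso_def by blast
qed

definition lit :: "'a set \<Rightarrow> ('r \<Rightarrow> 'a set set) \<Rightarrow> (nat \<Rightarrow> 'a) \<Rightarrow> 'r fm \<Rightarrow> 'r fm" where
  "lit M I w \<phi> = (if sat M I w \<phi> then \<phi> else Neg \<phi>)"

fun conjs :: "'r fm list \<Rightarrow> 'r fm" where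
  "conjs [] = Neg (Ex 0 (Neg (Eq 0 0)))"
| "conjs (\<phi> # \<phi>s) = Conj \<phi> (conjs \<phi>s)"

fun exs :: "nat list \<Rightarrow> 'r fm \<Rightarrow> 'r fm" where
  "exs [] \<phi> = \<phi>"
| "exs (x # xs) \<phi> = Ex x (exs xs \<phi>)"

lemma sat_conjs: "sat M I v (conjs l) \<longleftrightarrow> (\<forall>\<phi>\<in>set l. sat M I v \<phi>)"
  by (induction l) auto

lemma fv_conjs: "fv (conjs l) = (\<Union>\<phi>\<in>set l. fv \<phi>)"
  by (induction l) auto

lemma fv_exs: "fv (exs xs \<phi>) = fv \<phi> - set xs"
  by (induction xs) auto

lemma sat_exs:
  "sat M I v (exs xs \<phi>) \<longleftrightarrow>
    (\<exists>u. (\<forall>i. i \<notin> set xs \<longrightarrow> u i = v i) \<and> (\<forall>i\<in>set xs. u i \<in> M) \<and> sat M I u \<phi>)"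
proof (induction xs arbitrary: v)
  case Nil
  have "(\<forall>i. u i = v i) \<longleftrightarrow> u = v" for u :: "nat \<Rightarrow> 'a" by auto
  then show ?case by simp
next
  case (Cons x xs)
  have "sat M I v (exs (x # xs) \<phi>) \<longleftrightarrow> (\<exists>a\<in>M. \<exists>u. (\<forall>i. i \<notin> set xs \<longrightarrow> u i = (v(x := a)) i)
      \<and> (\<forall>i\<in>set xs. u i \<in> M) \<and> sat M I u \<phi>)"
    using Cons.IH by simp
  also have "\<dots> \<longleftrightarrow>
      (\<exists>u. (\<forall>i. i \<notin> set (x # xs) \<longrightarrow> u i = v i) \<and> (\<forall>i\<in>set (x # xs). u i \<in> M) \<and> sat M I u \<phi>)"
    (is "?L \<longleftrightarrow> ?R")
  proof
    assume ?L
    then obtain a u where a: "a \<in> M" and u: "\<forall>i. i \<notin> set xs \<longrightarrow> u i = (v(x := a)) i"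
      "\<forall>i\<in>set xs. u i \<in> M" "sat M I u \<phi>" by blast
    have "u x \<in> M" using a u(1,2) by (cases "x \<in> set xs") auto
    then show ?R using u by (intro exI[of _ u]) auto
  next
    assume ?R
    then obtain u where u: "\<forall>i. i \<notin> set (x # xs) \<longrightarrow> u i = v i"
      "\<forall>i\<in>set (x # xs). u i \<in> M" "sat M I u \<phi>" by blast
    have "\<forall>i. i \<notin> set xs \<longrightarrow> u i = (v(x := u x)) i" using u(1) by auto
    moreover have "u x \<in> M" "\<forall>i\<in>set xs. u i \<in> M" using u(2) by auto
    ultimately show ?L using u(3) by blast
  qed
  finally show ?case .
qed

lemma embedding_of_atoms_agree:
  assumes wf: "wf_struct ar M I" and uM: "\<forall>i<N. u i \<in> M"
    and eq: "\<And>i j. i < N \<Longrightarrow> j < N \<Longrightarrow> u i = u j \<longleftrightarrow> w i = w j"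
    and rel: "\<And>E xs. length xs = ar E \<Longrightarrow> set xs \<subseteq> {..<N} \<Longrightarrow> sat M I u (Rel E xs) = sat M I w (Rel E xs)"
  shows "\<exists>h. embedding h (w ` {..<N}) I M I \<and> (\<forall>i<N. h (w i) = u i)"
proof -
  define B where "B = w ` {..<N}"
  define idx where "idx = inv_into {..<N} w"
  define h where "h = u \<circ> idx"
  have idx: "idx b < N" "w (idx b) = b" if "b \<in> B" for b
    using that inv_into_into[of b w "{..<N}"] f_inv_into_f[of b w "{..<N}"]
    unfolding idx_def B_def by auto
  have h_w: "h (w i) = u i" if "i < N" for i
    using idx[of "w i"] eq[of "idx (w i)" i] that unfolding h_def B_def by auto
  have h_inj: "inj_on h B"
  proof
    fix a b assume "a \<in> B" "b \<in> B" "h a = h b"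
    then show "a = b" using idx eq unfolding h_def by (metis comp_apply)
  qed
  have "s \<in> I E \<longleftrightarrow> h ` s \<in> I E" if s: "s \<subseteq> B" for E s
  proof (cases "card s = ar E")
    case False
    moreover have "card (h ` s) = card s" using inj_on_subset[OF h_inj s] by (rule card_image)
    ultimately show ?thesis using wf unfolding wf_struct_def by metis
  next
    case True
    have "finite s" using s finite_subset unfolding B_def by blast
    then obtain ys where ys: "set ys = s" "distinct ys" using finite_distinct_list by blast
    define xs where "xs = map idx ys"
    have w_xs: "map w xs = ys" unfolding xs_def map_map
      by (rule map_idI) (use ys s idx in auto)
    have u_xs: "map u xs = map h ys" unfolding xs_def h_def by simp
    have "length xs = ar E" using ys True distinct_card unfolding xs_def by fastforce
    moreover have "set xs \<subseteq> {..<N}" using ys s idx unfolding xs_def by auto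
    ultimately have "sat M I u (Rel E xs) = sat M I w (Rel E xs)" by (rule rel)
    moreover have "distinct (map h ys)" using ys inj_on_subset[OF h_inj s] by (simp add: distinct_map)
    ultimately show ?thesis using w_xs u_xs ys by simp
  qed
  moreover have "h ` B \<subseteq> M" using idx uM unfolding h_def by auto
  ultimately show ?thesis using h_inj h_w unfolding embedding_def B_def by blast
qed

lemma exists_diagram:
  fixes ar :: "'r::finite \<Rightarrow> nat" and I :: "'r \<Rightarrow> 'a set set"
  assumes wf: "wf_struct ar M I"
  shows "\<exists>\<phi>. fv \<phi> \<subseteq> {..<N} \<and> sat M I w \<phi> \<and>
    (\<forall>u. (\<forall>i<N. u i \<in> M) \<and> sat M I u \<phi> \<longrightarrow>
      (\<exists>h. embedding h (w ` {..<N}) I M I \<and> (\<forall>i<N. h (w i) = u i)))"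
proof -
  obtain es where es: "set es = (UNIV :: 'r set)" using finite_list[of "UNIV :: 'r set"] by auto
  define atoms where "atoms = [Eq i j. i <- [0..<N], j <- [0..<N]] @
    concat (map (\<lambda>E. map (Rel E) (List.n_lists (ar E) [0..<N])) es)"
  define \<phi> where "\<phi> = conjs (map (lit M I w) atoms)"
  have "fv \<phi> \<subseteq> {..<N}" unfolding \<phi>_def fv_conjs atoms_def by (auto simp: lit_def set_n_lists)
  moreover have "sat M I w \<phi>" unfolding \<phi>_def sat_conjs by (auto simp: lit_def)
  moreover have "\<exists>h. embedding h (w ` {..<N}) I M I \<and> (\<forall>i<N. h (w i) = u i)"
    if u: "\<forall>i<N. u i \<in> M" "sat M I u \<phi>" for u
  proof (rule embedding_of_atoms_agree[OF wf u(1)])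
    have agree: "sat M I u a = sat M I w a" if "a \<in> set atoms" for a
    proof -
      have "sat M I u (lit M I w a)" using u(2) that unfolding \<phi>_def sat_conjs by simp
      then show ?thesis unfolding lit_def by (cases "sat M I w a") auto
    qed
    show "u i = u j \<longleftrightarrow> w i = w j" if "i < N" "j < N" for i j
    proof -
      have "Eq i j \<in> set atoms" using that unfolding atoms_def by (auto simp: image_iff)
      then show ?thesis using agree by fastforce
    qed
    show "sat M I u (Rel E xs) = sat M I w (Rel E xs)"
      if "length xs = ar E" "set xs \<subseteq> {..<N}" for E xs
    proof -
      have "Rel E xs \<in> set atoms"
        using that es unfolding atoms_def by (auto simp: set_n_lists atLeast0LessThan)
      then show ?thesis by (rule agree)
    qed
  qed
  ultimately show ?thesis by blast
qed

lemma extend_to_enumeration: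
  fixes v :: "nat \<Rightarrow> 'a"
  assumes B: "finite B" and vB: "v ` {..<n} \<subseteq> B"
  shows "\<exists>w N. n \<le> N \<and> w ` {..<N} = B \<and> (\<forall>i. i \<notin> {n..<N} \<longrightarrow> w i = v i)"
proof -
  obtain bs where bs: "set bs = B" using finite_list[OF B] by blast
  define N where "N = n + length bs"
  define w where "w i = (if i \<in> {n..<N} then bs ! (i - n) else v i)" for i
  have "w ` {..<N} \<subseteq> B" using vB bs unfolding w_def N_def by auto
  moreover have "B \<subseteq> w ` {..<N}"
  proof
    fix b assume "b \<in> B"
    then obtain k where "k < length bs" "b = bs ! k" using bs by (metis in_set_conv_nth)
    then have "n + k < N" "w (n + k) = b" unfolding w_def N_def by auto
    then show "b \<in> w ` {..<N}" by force
  qed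
  ultimately have "w ` {..<N} = B" by (rule equalityI)
  moreover have "\<forall>i. i \<notin> {n..<N} \<longrightarrow> w i = v i" unfolding w_def by simp
  moreover have "n \<le> N" unfolding N_def by simp
  ultimately show ?thesis by blast
qed

lemma null_set_isolates_type:
  assumes model: "models_S ar \<alpha> M I"
    and null_superset: "\<And>A. finite A \<Longrightarrow> A \<subseteq> M \<Longrightarrow> \<exists>B. A \<subseteq> B \<and> null_set \<alpha> I M B"
    and B: "null_set \<alpha> I M (w ` {..<N})" and nN: "n \<le> N"
  shows "\<exists>\<phi>. fv \<phi> \<subseteq> {..<n} \<and> sat M I w \<phi> \<and> (\<forall>\<psi> u. fv \<psi> \<subseteq> {..<n} \<longrightarrow> sat M I w \<psi> \<longrightarrow>
    (\<forall>i<n. u i \<in> M) \<longrightarrow> sat M I u \<phi> \<longrightarrow> sat M I u \<psi>)"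
proof -
  have wf: "wf_struct ar M I" using model unfolding models_S_def by blast
  obtain \<phi> where \<phi>: "fv \<phi> \<subseteq> {..<N}" "sat M I w \<phi>"
    and diagram: "\<And>u. \<forall>i<N. u i \<in> M \<Longrightarrow> sat M I u \<phi> \<Longrightarrow>
      \<exists>h. embedding h (w ` {..<N}) I M I \<and> (\<forall>i<N. h (w i) = u i)"
    using exists_diagram[OF wf, of N w] by blast
  show ?thesis
  proof (intro exI[of _ "exs [n..<N] \<phi>"] conjI allI impI)
    show "fv (exs [n..<N] \<phi>) \<subseteq> {..<n}" using \<phi>(1) by (auto simp: fv_exs)
    show "sat M I w (exs [n..<N] \<phi>)" unfolding sat_exs
      using B \<phi>(2) by (intro exI[of _ w]) (auto simp: null_set_def)
    fix \<psi> u assume \<psi>: "fv \<psi> \<subseteq> {..<n}" "sat M I w \<psi>"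
      and u: "\<forall>i<n. u i \<in> M" "sat M I u (exs [n..<N] \<phi>)"
    then obtain u' where u': "\<forall>i. i \<notin> {n..<N} \<longrightarrow> u' i = u i" "\<forall>i\<in>{n..<N}. u' i \<in> M" "sat M I u' \<phi>"
      unfolding sat_exs by auto
    have "\<forall>i<N. u' i \<in> M" using u(1) u' by (metis atLeastLessThan_iff not_less)
    then obtain h where h: "embedding h (w ` {..<N}) I M I" "\<forall>i<N. h (w i) = u' i"
      using diagram u'(3) by blast
    have "null_iso \<alpha> I M h (w ` {..<N})" using B h(1) unfolding null_iso_def by blast
    moreover have "\<forall>i\<in>fv \<psi>. w i \<in> w ` {..<N}" using \<psi>(1) nN by auto
    ultimately have "sat M I w \<psi> = sat M I (h \<circ> w) \<psi>"
      using null_iso_sat[OF model null_superset] by blast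
    also have "\<dots> = sat M I u \<psi>" using h(2) u'(1) \<psi>(1) nN by (intro sat_fv_cong) auto
    finally show "sat M I u \<psi>" using \<psi>(2) by simp
  qed
qed

theorem lemma5p8:
  fixes ar :: "'r::finite \<Rightarrow> nat" and \<alpha> :: "'r \<Rightarrow> real"
    and M :: "'a set" and I :: "'r \<Rightarrow> 'a set set"
  assumes arity: "\<And>E. ar E \<ge> 2"
    and alpha: "\<And>E. 0 < \<alpha> E \<and> \<alpha> E \<le> 1"
    and nontriv: "\<not> (\<forall>E. ar E = 2 \<and> \<alpha> E = 1)"
    and model: "models_S ar \<alpha> M I"
    and d0: "\<And>A. finite A \<Longrightarrow> A \<subseteq> M \<Longrightarrow> dM \<alpha> M I A = 0"
    and closures: "finite_closures \<alpha> M I"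
  shows "atomic_model M I"
  unfolding atomic_model_def
proof (intro allI impI)
  fix n and v :: "nat \<Rightarrow> 'a" assume vM: "\<forall>i<n. v i \<in> M"
  have null_superset: "\<exists>B. A \<subseteq> B \<and> null_set \<alpha> I M B" if "finite A" "A \<subseteq> M" for A
    using exists_null_superset[OF _ d0 closures that] alpha less_imp_le by blast
  obtain B where vB: "v ` {..<n} \<subseteq> B" and B: "null_set \<alpha> I M B"
    using null_superset[of "v ` {..<n}"] vM by auto
  obtain w N where N: "n \<le> N" "w ` {..<N} = B" and wv: "\<forall>i. i \<notin> {n..<N} \<longrightarrow> w i = v i"
    using extend_to_enumeration[OF _ vB] B unfolding null_set_def by blast
  have v_w: "sat M I v \<chi> = sat M I w \<chi>" if "fv \<chi> \<subseteq> {..<n}" for \<chi>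
    using that wv by (intro sat_fv_cong) auto
  obtain \<phi> where "fv \<phi> \<subseteq> {..<n}" "sat M I w \<phi>" "\<forall>\<psi> u. fv \<psi> \<subseteq> {..<n} \<longrightarrow> sat M I w \<psi> \<longrightarrow>
      (\<forall>i<n. u i \<in> M) \<longrightarrow> sat M I u \<phi> \<longrightarrow> sat M I u \<psi>"
    using null_set_isolates_type[OF model null_superset _ N(1)] B N(2) by blast
  then show "\<exists>\<phi>. fv \<phi> \<subseteq> {..<n} \<and> sat M I v \<phi> \<and> (\<forall>\<psi>. fv \<psi> \<subseteq> {..<n} \<and> sat M I v \<psi> \<longrightarrow>
      (\<forall>u. (\<forall>i<n. u i \<in> M) \<and> sat M I u \<phi> \<longrightarrow> sat M I u \<psi>))"
    using v_w by blast
qed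

end
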